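(* Let $R$ be an integral domain with field of fractions $K$, and let $U\in R^{m\times n}$ have rank $n$ over $K$ (so $n\le m$). Then $\mathrm{coker}(U)\cong R^{m-n}$ if and only if $\mathrm{coker}(UU^t)\cong R^{m-n}$.
   Context: For a matrix $B\in R^{m\times k}$, $\mathrm{coker}(B)=R^m/\mathrm{im}(B:R^k\to R^m)$; $U^t$ is the transpose. *)

theory Defs
  imports "Jordan_Normal_Form.DL_Rank" "HOL-Computational_Algebra.Fraction_Field"
begin

definition to_fract_mat :: "'a::idom mat \<Rightarrow> 'a fract mat" where
  "to_fract_mat U = map_mat (\<lambda>x. Fract x 1) U"

text \<open>By the first isomorphism theorem this holds iff there is an R-linear surjection
  R^m -> R^r (every R-linear map R^m -> R^r is given by an r x m matrix A)
  whose kernel is exactly im(B).\<close>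
definition coker_iso_free :: "'a::comm_ring_1 mat \<Rightarrow> nat \<Rightarrow> bool" where
  "coker_iso_free B r \<longleftrightarrow>
     (\<exists>A \<in> carrier_mat r (dim_row B).
        (\<forall>y \<in> carrier_vec r. \<exists>x \<in> carrier_vec (dim_row B). A *\<^sub>v x = y) \<and>
        {x \<in> carrier_vec (dim_row B). A *\<^sub>v x = 0\<^sub>v r}
          = {B *\<^sub>v z | z. z \<in> carrier_vec (dim_col B)})"

end

theory Submission
  imports Defs
begin

text \<open>
  The image of \<open>U U\<^sup>t\<close> is always contained in that of \<open>U\<close>, and since \<open>coker_iso_free B r\<close>
  depends on \<open>B\<close> only through its image, it suffices to show that either condition forces
  the two images to agree. Rank \<open>n\<close> over the fraction field makes \<open>U\<close> left cancellable.
  If \<open>coker U\<close> is free, the sequence \<open>0 \<rightarrow> R\<^sup>n \<rightarrow> R\<^sup>m \<rightarrow> R\<^sup>m\<^sup>-\<^sup>n \<rightarrow> 0\<close> splits, so \<open>L U = 1\<close>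
  for some \<open>L\<close>, and then \<open>U = U U\<^sup>t L\<^sup>t\<close>. If \<open>coker (U U\<^sup>t)\<close> is free with defining map \<open>A\<close>,
  then \<open>U (A U)\<^sup>t = (A U U\<^sup>t)\<^sup>t = 0\<close>, hence \<open>A U = 0\<close> and the image of \<open>U\<close> lies in \<open>ker A\<close>.
\<close>

definition mat_image :: "'a::semiring_0 mat \<Rightarrow> 'a vec set" where
  "mat_image B = {B *\<^sub>v z | z. z \<in> carrier_vec (dim_col B)}"

lemma mat_image_memI: "z \<in> carrier_vec (dim_col B) \<Longrightarrow> B *\<^sub>v z \<in> mat_image B"
  unfolding mat_image_def by blast

lemma mat_image_memE:
  assumes "y \<in> mat_image B"
  obtains z where "z \<in> carrier_vec (dim_col B)" and "y = B *\<^sub>v z"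
  using assms unfolding mat_image_def by blast

lemma coker_iso_free_cong:
  assumes "dim_row B = dim_row C" and "mat_image B = mat_image C"
  shows "coker_iso_free B r = coker_iso_free C r"
  using assms unfolding coker_iso_free_def mat_image_def by simp

lemma coker_iso_freeE:
  assumes "coker_iso_free B r" and "B \<in> carrier_mat m k"
  obtains A where "A \<in> carrier_mat r m"
    and "\<And>y. y \<in> carrier_vec r \<Longrightarrow> y \<in> mat_image A"
    and "{x \<in> carrier_vec m. A *\<^sub>v x = 0\<^sub>v r} = mat_image B"
proof -
  obtain A where A: "A \<in> carrier_mat r m"
    and surj: "\<forall>y \<in> carrier_vec r. \<exists>x \<in> carrier_vec m. A *\<^sub>v x = y"
    and ker: "{x \<in> carrier_vec m. A *\<^sub>v x = 0\<^sub>v r} = mat_image B"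
    using assms unfolding coker_iso_free_def mat_image_def by auto
  have "y \<in> mat_image A" if "y \<in> carrier_vec r" for y
    using surj that A unfolding mat_image_def by auto
  then show thesis by (rule that[OF A _ ker])
qed

lemma col_in_mat_image:
  fixes B :: "'a::semiring_1 mat"
  assumes "j < dim_col B"
  shows "col B j \<in> mat_image B"
proof -
  have "col B j = col (B * 1\<^sub>m (dim_col B)) j" by simp
  also have "\<dots> = B *\<^sub>v unit_vec (dim_col B) j"
    using col_mult2[of B "dim_row B" "dim_col B" "1\<^sub>m (dim_col B)" "dim_col B" j] assms by simp
  finally show ?thesis by (simp add: mat_image_memI)
qed

lemma mat_image_mult_subset:
  assumes B: "B \<in> carrier_mat m n" and C: "C \<in> carrier_mat n k"
  shows "mat_image (B * C) \<subseteq> mat_image B"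
proof
  fix y assume "y \<in> mat_image (B * C)"
  then obtain z where z: "z \<in> carrier_vec (dim_col (B * C))" and y: "y = (B * C) *\<^sub>v z"
    by (rule mat_image_memE)
  have "y = B *\<^sub>v (C *\<^sub>v z)" using y z B C by simp
  moreover have "C *\<^sub>v z \<in> carrier_vec (dim_col B)" using z B C by simp
  ultimately show "y \<in> mat_image B" by (simp add: mat_image_memI)
qed

lemma mult_eq_zero_if_mat_image_in_kernel:
  fixes A B :: "'a::semiring_1 mat"
  assumes A: "A \<in> carrier_mat r m" and B: "B \<in> carrier_mat m k"
    and ker: "\<And>y. y \<in> mat_image B \<Longrightarrow> A *\<^sub>v y = 0\<^sub>v r"
  shows "A * B = 0\<^sub>m r k"
proof (rule mat_col_eqI)
  fix j assume "j < dim_col (0\<^sub>m r k :: 'a mat)"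
  then have j: "j < k" by simp
  then have "A *\<^sub>v col B j = 0\<^sub>v r" using ker[OF col_in_mat_image[of j B]] B by simp
  then show "col (A * B) j = col (0\<^sub>m r k) j" using col_mult2[OF A B j] j by simp
qed (use A B in simp_all)

lemma mult_factor_if_cols_in_mat_image:
  assumes B: "B \<in> carrier_mat m n" and P: "P \<in> carrier_mat m k"
    and cols: "\<And>j. j < k \<Longrightarrow> col P j \<in> mat_image B"
  obtains L where "L \<in> carrier_mat n k" and "B * L = P"
proof -
  define l where "l j = (SOME z. z \<in> carrier_vec n \<and> B *\<^sub>v z = col P j)" for j
  have l: "l j \<in> carrier_vec n \<and> B *\<^sub>v l j = col P j" if j: "j < k" for j
  proof -
    obtain z where "z \<in> carrier_vec (dim_col B)" and "col P j = B *\<^sub>v z"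
      using cols[OF j] by (rule mat_image_memE)
    then have "\<exists>z. z \<in> carrier_vec n \<and> B *\<^sub>v z = col P j" using B by auto
    then show ?thesis unfolding l_def by (rule someI_ex)
  qed
  define L where "L = mat_of_cols n (map l [0..<k])"
  have L: "L \<in> carrier_mat n k" using mat_of_cols_carrier(1)[of n "map l [0..<k]"] by (simp add: L_def)
  have "B * L = P"
  proof (rule mat_col_eqI)
    fix j assume "j < dim_col P"
    then have j: "j < k" using P by simp
    then have "col L j = l j" unfolding L_def using l by simp
    then show "col (B * L) j = col P j" using col_mult2[OF B L j] l[OF j] by simp
  qed (use B L P in simp_all)
  with L show thesis by (rule that)
qed

lemma surj_mat_right_inverse:
  assumes A: "A \<in> carrier_mat r m" and surj: "\<And>y. y \<in> carrier_vec r \<Longrightarrow> y \<in> mat_image A"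
  obtains S where "S \<in> carrier_mat m r" and "A * S = 1\<^sub>m r"
  by (rule mult_factor_if_cols_in_mat_image[OF A one_carrier_mat]) (simp add: surj)

lemma (in vec_space) full_rank_mult_vec_eq_zero:
  assumes A: "A \<in> carrier_mat n nc" and r: "rank A = nc"
    and v: "v \<in> carrier_vec nc" and Av: "A *\<^sub>v v = 0\<^sub>v n"
  shows "v = 0\<^sub>v nc"
proof (rule ccontr)
  assume nz: "v \<noteq> 0\<^sub>v nc"
  have distinct: "distinct (cols A)"
  proof (rule ccontr)
    assume nd: "\<not> distinct (cols A)"
    obtain S where S: "maximal S (\<lambda>T. T \<subseteq> set (cols A) \<and> lin_indpt T)"
      using maximal_exists[of "\<lambda>T. T \<subseteq> set (cols A) \<and> lin_indpt T" "card (set (cols A))" "{}"]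
      by (meson List.finite_set card_mono empty_iff empty_subsetI finite_lin_indpt2 rev_finite_subset)
    then have "card S \<le> card (set (cols A))" by (simp add: card_mono maximal_def)
    also have "\<dots> < nc"
    proof -
      have "card (set (cols A)) \<noteq> length (cols A)" using nd card_distinct by blast
      then show ?thesis using card_length[of "cols A"] A by simp
    qed
    finally show False using rank_card_indpt[OF A S] r by simp
  qed
  have "lin_indpt (set (cols A))" using full_rank_lin_indpt[OF A r distinct] .
  then show False using lin_depI[OF A v nz Av distinct] by simp
qed

lemma Fract_eq_zero_iff: "Fract (a::'a::idom) 1 = 0 \<longleftrightarrow> a = 0"
  unfolding Zero_fract_def by (simp add: eq_fract)

lemma semiring_hom_Fract: "semiring_hom (\<lambda>x::'a::idom. Fract x 1)"
  by unfold_locales (simp_all add: One_fract_def Fract_eq_zero_iff)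

lemma fract_full_rank_mult_vec_eq_zero:
  fixes U :: "'a::idom mat"
  assumes U: "U \<in> carrier_mat m n" and r: "vec_space.rank m (to_fract_mat U) = n"
    and z: "z \<in> carrier_vec n" and Uz: "U *\<^sub>v z = 0\<^sub>v m"
  shows "z = 0\<^sub>v n"
proof -
  interpret h: semiring_hom "\<lambda>x::'a. Fract x 1" by (rule semiring_hom_Fract)
  have "to_fract_mat U *\<^sub>v map_vec (\<lambda>x. Fract x 1) z = map_vec (\<lambda>x. Fract x 1) (U *\<^sub>v z)"
    unfolding to_fract_mat_def using h.mult_mat_vec_hom[OF U z] by simp
  also have "\<dots> = 0\<^sub>v m" unfolding Uz by (rule h.vec_hom_zero)
  finally have "map_vec (\<lambda>x. Fract x 1) z = 0\<^sub>v n"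
    using vec_space.full_rank_mult_vec_eq_zero[of "to_fract_mat U" m n] U r z
    unfolding to_fract_mat_def by auto
  then show ?thesis using z by (auto simp: vec_eq_iff Fract_eq_zero_iff)
qed

lemma fract_full_rank_mult_left_cancel:
  fixes U :: "'a::idom mat"
  assumes U: "U \<in> carrier_mat m n" and r: "vec_space.rank m (to_fract_mat U) = n"
    and X: "X \<in> carrier_mat n k" and Y: "Y \<in> carrier_mat n k" and UXY: "U * X = U * Y"
  shows "X = Y"
proof (rule mat_col_eqI)
  fix j assume "j < dim_col Y"
  then have j: "j < k" using Y by simp
  have "U *\<^sub>v (col X j - col Y j) = U *\<^sub>v col X j - U *\<^sub>v col Y j"
    by (rule mult_minus_distrib_mat_vec) (use U X Y in auto)
  also have "\<dots> = col (U * X) j - col (U * Y) j"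
    using col_mult2[OF U X j] col_mult2[OF U Y j] by simp
  also have "\<dots> = 0\<^sub>v m" unfolding UXY using U Y j by simp
  finally have "U *\<^sub>v (col X j - col Y j) = 0\<^sub>v m" .
  moreover have "col X j - col Y j \<in> carrier_vec n" using X Y j by simp
  ultimately have diff: "col X j - col Y j = 0\<^sub>v n"
    using fract_full_rank_mult_vec_eq_zero[OF U r] by blast
  show "col X j = col Y j"
  proof (rule eq_vecI)
    fix i assume "i < dim_vec (col Y j)"
    then have "i < n" using Y by simp
    then have "(col X j - col Y j) $ i = 0" unfolding diff by simp
    then show "col X j $ i = col Y j $ i" using X Y \<open>i < n\<close> by simp
  qed (use X Y in simp)
qed (use X Y in simp_all)

text \<open>Freeness of \<open>coker U\<close> splits \<open>R\<^sup>m \<rightarrow> R\<^sup>r\<close> by some \<open>S\<close>; the columns of the projection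
  \<open>1 - S A\<close> onto \<open>ker A = im U\<close> give \<open>1 - S A = U L\<close>, and \<open>L\<close> is a left inverse of \<open>U\<close>.\<close>

lemma coker_iso_free_left_inverse:
  fixes U :: "'a::idom mat"
  assumes U: "U \<in> carrier_mat m n" and r: "vec_space.rank m (to_fract_mat U) = n"
    and free: "coker_iso_free U k"
  obtains L where "L \<in> carrier_mat n m" and "L * U = 1\<^sub>m n"
proof -
  obtain A where A: "A \<in> carrier_mat k m" and surj: "\<And>y. y \<in> carrier_vec k \<Longrightarrow> y \<in> mat_image A"
    and ker: "{x \<in> carrier_vec m. A *\<^sub>v x = 0\<^sub>v k} = mat_image U"
    using coker_iso_freeE[OF free U] by blast
  obtain S where S: "S \<in> carrier_mat m k" and AS: "A * S = 1\<^sub>m k"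
    using surj_mat_right_inverse[OF A surj] .
  define P where "P = 1\<^sub>m m - S * A"
  have P: "P \<in> carrier_mat m m" unfolding P_def using S A by auto
  have "A * P = A * 1\<^sub>m m - A * (S * A)"
    unfolding P_def by (rule mult_minus_distrib_mat) (use A S in auto)
  also have "\<dots> = A - (A * S) * A" using A S by simp
  finally have AP: "A * P = 0\<^sub>m k m" unfolding AS using A by simp
  have cols_P: "col P j \<in> mat_image U" if "j < m" for j
  proof -
    have "A *\<^sub>v col P j = 0\<^sub>v k" using col_mult2[OF A P that] AP that by simp
    then show ?thesis unfolding ker[symmetric] using P that by simp
  qed
  obtain L where L: "L \<in> carrier_mat n m" and UL: "U * L = P"
    using mult_factor_if_cols_in_mat_image[OF U P cols_P] .
  have AU: "A * U = 0\<^sub>m k n"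
    by (rule mult_eq_zero_if_mat_image_in_kernel[OF A U]) (simp flip: ker)
  have "U * (L * U) = P * U" using assoc_mult_mat[OF U L U] UL by simp
  also have "\<dots> = 1\<^sub>m m * U - (S * A) * U"
    unfolding P_def by (rule minus_mult_distrib_mat) (use U S A in auto)
  also have "\<dots> = U - S * (A * U)" using U S A by simp
  also have "\<dots> = U * 1\<^sub>m n" unfolding AU using U S by (intro eq_matI) auto
  finally have "U * (L * U) = U * 1\<^sub>m n" .
  then have "L * U = 1\<^sub>m n"
    by (rule fract_full_rank_mult_left_cancel[OF U r, rotated 2]) (use L U in auto)
  with L show thesis by (rule that)
qed

lemma mat_image_subset_mult_transpose_if_left_inverse:
  fixes U L :: "'a::comm_semiring_1 mat"
  assumes U: "U \<in> carrier_mat m n" and L: "L \<in> carrier_mat n m" and LU: "L * U = 1\<^sub>m n"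
  shows "mat_image U \<subseteq> mat_image (U * transpose_mat U)"
proof
  fix y assume "y \<in> mat_image U"
  then obtain z where z: "z \<in> carrier_vec n" and y: "y = U *\<^sub>v z"
    using U unfolding mat_image_def by auto
  have "transpose_mat U * transpose_mat L = 1\<^sub>m n"
    using transpose_mult[OF L U] LU by simp
  then have "y = U *\<^sub>v ((transpose_mat U * transpose_mat L) *\<^sub>v z)" using y z by simp
  also have "\<dots> = (U * transpose_mat U) *\<^sub>v (transpose_mat L *\<^sub>v z)" using U L z by simp
  finally show "y \<in> mat_image (U * transpose_mat U)"
    using U L z unfolding mat_image_def by fastforce
qed

lemma mat_image_subset_mult_transpose_if_coker_iso_free:
  fixes U :: "'a::idom mat"
  assumes U: "U \<in> carrier_mat m n" and r: "vec_space.rank m (to_fract_mat U) = n"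
    and free: "coker_iso_free (U * transpose_mat U) k"
  shows "mat_image U \<subseteq> mat_image (U * transpose_mat U)"
proof -
  let ?Ut = "transpose_mat U"
  have UUt: "U * ?Ut \<in> carrier_mat m m" using U by simp
  obtain A where A: "A \<in> carrier_mat k m"
    and ker: "{x \<in> carrier_vec m. A *\<^sub>v x = 0\<^sub>v k} = mat_image (U * ?Ut)"
    using coker_iso_freeE[OF free UUt] by blast
  have "A * (U * ?Ut) = 0\<^sub>m k m"
    by (rule mult_eq_zero_if_mat_image_in_kernel[OF A UUt]) (simp flip: ker)
  then have "transpose_mat ((A * U) * ?Ut) = 0\<^sub>m m k" using A U by simp
  then have "U * transpose_mat (A * U) = U * 0\<^sub>m n k"
    using transpose_mult[of "A * U" k n ?Ut m] A U by simp
  then have "transpose_mat (A * U) = 0\<^sub>m n k"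
    by (rule fract_full_rank_mult_left_cancel[OF U r, rotated 2]) (use A U in auto)
  then have AU: "A * U = 0\<^sub>m k n"
    by (metis transpose_transpose zero_transpose_mat)
  show ?thesis
  proof
    fix y assume "y \<in> mat_image U"
    then obtain z where z: "z \<in> carrier_vec n" and y: "y = U *\<^sub>v z"
      using U unfolding mat_image_def by auto
    have "A *\<^sub>v y = (A * U) *\<^sub>v z" using y z A U by simp
    also have "\<dots> = 0\<^sub>v k" unfolding AU using z by (intro eq_vecI) auto
    finally have "A *\<^sub>v y = 0\<^sub>v k" .
    then show "y \<in> mat_image (U * ?Ut)" unfolding ker[symmetric] using y z U by simp
  qed
qed

theorem proposition8p3:
  fixes U :: "'a::idom mat" and m n :: nat
  assumes "U \<in> carrier_mat m n"
    and "vec_space.rank m (to_fract_mat U) = n"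
  shows "coker_iso_free U (m - n) \<longleftrightarrow> coker_iso_free (U * transpose_mat U) (m - n)"
proof -
  note U = assms(1) and r = assms(2)
  have sub: "mat_image (U * transpose_mat U) \<subseteq> mat_image U"
    using mat_image_mult_subset[OF U] U by simp
  have iff: "coker_iso_free U (m - n) = coker_iso_free (U * transpose_mat U) (m - n)"
    if "mat_image U \<subseteq> mat_image (U * transpose_mat U)"
    by (rule coker_iso_free_cong) (use U sub that in auto)
  show ?thesis
  proof
    assume free: "coker_iso_free U (m - n)"
    obtain L where "L \<in> carrier_mat n m" and "L * U = 1\<^sub>m n"
      using coker_iso_free_left_inverse[OF U r free] .
    then show "coker_iso_free (U * transpose_mat U) (m - n)"
      using iff[OF mat_image_subset_mult_transpose_if_left_inverse[OF U]] free by simp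
  next
    assume free: "coker_iso_free (U * transpose_mat U) (m - n)"
    then show "coker_iso_free U (m - n)"
      using iff[OF mat_image_subset_mult_transpose_if_coker_iso_free[OF U r free]] by simp
  qed
qed

end
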